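(* For every integer $n\ge1$ there is an rpoNFA $\mathcal{A}_n$ over an $n$-letter alphabet with $n(n+2)$ states such that the shortest word not accepted by $\mathcal{A}_n$ has length $\binom{2n}{n}-1$. Consequently, every DFA accepting $L(\mathcal{A}_n)$ has at least $\binom{2n}{n}$ states.
   Context: A poNFA is an NFA whose reachability relation ($p\le q$ iff $q\in p\cdot w$ for some word $w$) is a partial order; an rpoNFA is a poNFA such that for every state $q$ and letter $a$, $q\in q\cdot a$ implies $q\cdot a=\{q\}$. *)

theory Defs
  imports Main
begin

record ('s, 'a) nfa =
  states :: "'s set"
  alpha  :: "'a set"
  trans  :: "'s \<Rightarrow> 'a \<Rightarrow> 's set"
  init   :: "'s set"
  fin    :: "'s set"

definition nfa :: "('s, 'a) nfa \<Rightarrow> bool" where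
  "nfa A \<longleftrightarrow> finite (states A) \<and> finite (alpha A) \<and>
     init A \<subseteq> states A \<and> fin A \<subseteq> states A \<and>
     (\<forall>q\<in>states A. \<forall>a\<in>alpha A. trans A q a \<subseteq> states A)"

definition nfa_run :: "('s, 'a) nfa \<Rightarrow> 's set \<Rightarrow> 'a list \<Rightarrow> 's set" where
  "nfa_run A S w = foldl (\<lambda>T a. \<Union>q\<in>T. trans A q a) S w"

definition nfa_lang :: "('s, 'a) nfa \<Rightarrow> 'a list set" where
  "nfa_lang A = {w \<in> lists (alpha A). nfa_run A (init A) w \<inter> fin A \<noteq> {}}"

definition reach :: "('s, 'a) nfa \<Rightarrow> 's \<Rightarrow> 's \<Rightarrow> bool" where
  "reach A p q \<longleftrightarrow> (\<exists>w\<in>lists (alpha A). q \<in> nfa_run A {p} w)"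

(* reachability is always reflexive and transitive; partial order = antisymmetric *)
definition poNFA :: "('s, 'a) nfa \<Rightarrow> bool" where
  "poNFA A \<longleftrightarrow> nfa A \<and>
     (\<forall>p\<in>states A. \<forall>q\<in>states A. reach A p q \<and> reach A q p \<longrightarrow> p = q)"

definition rpoNFA :: "('s, 'a) nfa \<Rightarrow> bool" where
  "rpoNFA A \<longleftrightarrow> poNFA A \<and>
     (\<forall>q\<in>states A. \<forall>a\<in>alpha A. q \<in> trans A q a \<longrightarrow> trans A q a = {q})"

record ('q, 'a) dfa =
  dstates :: "'q set"
  dalpha  :: "'a set"
  dtrans  :: "'q \<Rightarrow> 'a \<Rightarrow> 'q"
  dinit   :: "'q"
  dfin    :: "'q set"

definition dfa :: "('q, 'a) dfa \<Rightarrow> bool" where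
  "dfa D \<longleftrightarrow> finite (dstates D) \<and> finite (dalpha D) \<and>
     dinit D \<in> dstates D \<and> dfin D \<subseteq> dstates D \<and>
     (\<forall>q\<in>dstates D. \<forall>a\<in>dalpha D. dtrans D q a \<in> dstates D)"

definition dfa_lang :: "('q, 'a) dfa \<Rightarrow> 'a list set" where
  "dfa_lang D = {w \<in> lists (dalpha D). foldl (dtrans D) (dinit D) w \<in> dfin D}"

end

theory Submission
  imports Defs
begin

text \<open>
  For every letter j < n the automaton has a chain of cells (j,0), ..., (j,n), and one accepting
  sink. In cell (j,v) the letters below j loop, the letter j moves to the cells (k,v+1) with k \<le> j,
  and larger letters go to the sink; the top cells (j,n) are the only rejecting states and have no
  way out. Starting from all cells (k,0), a word is rejected iff every run is trapped in the top
  level. Writing w(i,m) for a word driving the cells (k,v), k < i, up by m levels, one has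
  w(i+1,m+1) = w(i,m+1) i w(i+1,m): first lift the cells below i, then use i to lift cell (i,v)
  together with fresh copies of all lower cells. Hence |w(i,m)| = C(i+m,i) - 1, and an induction
  along the same recursion shows that every shorter word keeps some run alive. A shortest rejected
  word of length \<ell> forces \<ell> + 1 distinct states on every DFA along its prefixes.
\<close>

lemma nfa_run_Nil [simp]: "nfa_run A S [] = S"
  by (simp add: nfa_run_def)

lemma nfa_run_Cons: "nfa_run A S (a # w) = nfa_run A (\<Union>q\<in>S. trans A q a) w"
  by (simp add: nfa_run_def)

lemma nfa_run_append: "nfa_run A S (u @ v) = nfa_run A (nfa_run A S u) v"
  by (simp add: nfa_run_def)

lemma nfa_run_snoc: "nfa_run A S (w @ [a]) = (\<Union>q\<in>nfa_run A S w. trans A q a)"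
  by (simp add: nfa_run_append nfa_run_Cons)

lemma nfa_run_mono: "S \<subseteq> T \<Longrightarrow> nfa_run A S w \<subseteq> nfa_run A T w"
proof (induction w arbitrary: S T)
  case (Cons a w)
  then show ?case by (simp add: nfa_run_Cons UN_mono)
qed simp

lemma nfa_run_Un: "nfa_run A (S \<union> T) w = nfa_run A S w \<union> nfa_run A T w"
  by (induction w arbitrary: S T) (simp_all add: nfa_run_Cons UN_Un)

lemma nfa_run_empty [simp]: "nfa_run A {} w = {}"
  by (induction w) (simp_all add: nfa_run_Cons)

lemma nfa_run_self_loops:
  "(\<And>a. a \<in> set w \<Longrightarrow> trans A q a = {q}) \<Longrightarrow> nfa_run A {q} w = {q}"
  by (induction w) (simp_all add: nfa_run_Cons)

lemma nfa_run_subset_states: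
  assumes "nfa A" "S \<subseteq> states A" "w \<in> lists (alpha A)"
  shows "nfa_run A S w \<subseteq> states A"
  using assms(2,3)
proof (induction w arbitrary: S)
  case (Cons a w)
  have "trans A q a \<subseteq> states A" if "q \<in> S" for q
    using assms(1) Cons.prems that unfolding nfa_def by (meson Cons_in_lists_iff subsetD)
  then show ?case using Cons by (simp add: nfa_run_Cons UN_least)
qed simp

lemma nfa_run_rank_increasing:
  fixes rk :: "'s \<Rightarrow> 'b::order"
  assumes "nfa A"
    and rank: "\<And>q a. q \<in> states A \<Longrightarrow> a \<in> alpha A \<Longrightarrow>
      trans A q a = {q} \<or> (\<forall>q'\<in>trans A q a. rk q < rk q')"
    and "p \<in> states A" "w \<in> lists (alpha A)" "q \<in> nfa_run A {p} w"
  shows "q = p \<or> rk p < rk q"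
  using assms(4,5)
proof (induction w arbitrary: q rule: rev_induct)
  case (snoc a w)
  then obtain q' where q': "q' \<in> nfa_run A {p} w" "q \<in> trans A q' a"
    by (auto simp: nfa_run_snoc)
  have "q' \<in> states A"
    using nfa_run_subset_states[OF assms(1), of "{p}" w] assms(3) snoc.prems q'(1) by auto
  then have "q = q' \<or> rk q' < rk q"
    using rank[of q' a] snoc.prems q'(2) by auto
  then show ?case
    using snoc.IH[OF _ q'(1)] snoc.prems by (auto intro: less_trans)
qed simp

lemma rpoNFA_if_rank_increasing:
  fixes rk :: "'s \<Rightarrow> 'b::order"
  assumes A: "nfa A"
    and rank: "\<And>q a. q \<in> states A \<Longrightarrow> a \<in> alpha A \<Longrightarrow>
      trans A q a = {q} \<or> (\<forall>q'\<in>trans A q a. rk q < rk q')"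
  shows "rpoNFA A"
proof -
  have "p = q" if "p \<in> states A" "q \<in> states A" "reach A p q" "reach A q p" for p q
  proof -
    from that obtain u v where "u \<in> lists (alpha A)" "q \<in> nfa_run A {p} u"
        "v \<in> lists (alpha A)" "p \<in> nfa_run A {q} v"
      by (auto simp: reach_def)
    then have "q = p \<or> rk p < rk q" "p = q \<or> rk q < rk p"
      using nfa_run_rank_increasing[OF A rank] that(1,2) by blast+
    then show "p = q" by auto
  qed
  moreover have "trans A q a = {q}" if "q \<in> states A" "a \<in> alpha A" "q \<in> trans A q a" for q a
    using rank[OF that(1,2)] that(3) by auto
  ultimately show ?thesis
    using A by (auto simp: rpoNFA_def poNFA_def)
qed

lemma foldl_dtrans_in_dstates:
  "dfa D \<Longrightarrow> q \<in> dstates D \<Longrightarrow> w \<in> lists (dalpha D) \<Longrightarrow> foldl (dtrans D) q w \<in> dstates D"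
  by (induction w arbitrary: q) (auto simp: dfa_def)

lemma dfa_card_gt_shortest_rejected:
  assumes D: "dfa D" and w: "w \<in> lists (dalpha D)" "w \<notin> dfa_lang D"
    and shorter: "\<And>u. u \<in> lists (dalpha D) \<Longrightarrow> length u < length w \<Longrightarrow> u \<in> dfa_lang D"
  shows "length w < card (dstates D)"
proof -
  define g where "g t = foldl (dtrans D) (dinit D) (take t w)" for t
  have "g s \<noteq> g t" if "s < t" "t \<le> length w" for s t
  proof
    assume eq: "g s = g t"
    define u where "u = take s w @ drop t w"
    have u: "u \<in> lists (dalpha D)" "length u < length w"
      using w(1) that by (auto simp: u_def dest: in_set_takeD in_set_dropD)
    have "foldl (dtrans D) (dinit D) u = foldl (dtrans D) (g s) (drop t w)"
      by (simp add: u_def g_def)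
    also have "\<dots> = foldl (dtrans D) (g t) (drop t w)"
      by (simp add: eq)
    also have "\<dots> = foldl (dtrans D) (dinit D) w"
      by (metis append_take_drop_id foldl_append g_def)
    finally show False
      using shorter[OF u] w by (simp add: dfa_lang_def)
  qed
  then have "inj_on g {..length w}"
    by (metis atMost_iff inj_onI linorder_neqE_nat)
  moreover have "g ` {..length w} \<subseteq> dstates D"
    using D w(1) by (auto simp: g_def dfa_def intro!: foldl_dtrans_in_dstates dest: in_set_takeD)
  ultimately have "card {..length w} \<le> card (dstates D)"
    using D by (intro card_inj_on_le) (auto simp: dfa_def)
  then show ?thesis by simp
qed

fun rej_word :: "nat \<Rightarrow> nat \<Rightarrow> nat list" where
  "rej_word 0 m = []"
| "rej_word (Suc i) 0 = []"
| "rej_word (Suc i) (Suc m) = rej_word i (Suc m) @ i # rej_word (Suc i) m"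

lemma set_rej_word: "set (rej_word i m) \<subseteq> {..<i}"
  by (induction i m rule: rej_word.induct) auto

lemma length_rej_word: "length (rej_word i m) = (i + m choose i) - 1"
proof (induction i m rule: rej_word.induct)
  case (3 i m)
  have "(Suc i + Suc m choose Suc i) = (i + Suc m choose i) + (Suc i + m choose Suc i)"
    by (metis add_Suc binomial_Suc_Suc add_Suc_right)
  moreover have "0 < (i + Suc m choose i)" "0 < (Suc i + m choose Suc i)"
    by simp_all
  ultimately show ?case using 3 by (simp only: rej_word.simps length_append length_Cons)
qed auto

definition sink :: "nat \<Rightarrow> nat" where
  "sink n = n * Suc n"

definition cell :: "nat \<Rightarrow> nat \<Rightarrow> nat \<Rightarrow> nat" where
  "cell n j v = j * Suc n + v"

definition row :: "nat \<Rightarrow> nat \<Rightarrow> nat \<Rightarrow> nat set" where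
  "row n i v = (\<lambda>j. cell n j v) ` {..<i}"

definition binom_trans :: "nat \<Rightarrow> nat \<Rightarrow> nat \<Rightarrow> nat set" where
  "binom_trans n q a =
    (if q < sink n then
       (let j = q div Suc n; v = q mod Suc n in
        if a < j then {q}
        else if v = n then {}
        else if a = j then row n (Suc j) (Suc v)
        else {sink n})
     else if q = sink n then {q} else {})"

text \<open>The n - 1 states above the sink are unreachable padding up to the state count n(n+2).\<close>

definition binom_nfa :: "nat \<Rightarrow> (nat, nat) nfa" where
  "binom_nfa n = \<lparr>states = {..<n * (n + 2)}, alpha = {..<n}, trans = binom_trans n,
     init = row n n 0, fin = insert (sink n) {cell n j v | j v. j < n \<and> v < n}\<rparr>"

lemma cell_div [simp]: "v \<le> n \<Longrightarrow> cell n j v div Suc n = j"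
  and cell_mod [simp]: "v \<le> n \<Longrightarrow> cell n j v mod Suc n = v"
  by (simp_all add: cell_def del: mult_Suc_right)

lemma cell_less_sink: "j < n \<Longrightarrow> v \<le> n \<Longrightarrow> cell n j v < sink n"
proof -
  assume "j < n" "v \<le> n"
  then have "cell n j v < Suc j * Suc n" by (simp add: cell_def)
  also have "\<dots> \<le> sink n" using \<open>j < n\<close> unfolding sink_def by (intro mult_le_mono1) simp
  finally show ?thesis .
qed

lemma cell_inject [simp]:
  "v \<le> n \<Longrightarrow> v' \<le> n \<Longrightarrow> cell n j v = cell n j' v' \<longleftrightarrow> j = j' \<and> v = v'"
  by (metis cell_div cell_mod)

lemma cell_neq_sink [simp]:
  "j < n \<Longrightarrow> v \<le> n \<Longrightarrow> cell n j v \<noteq> sink n"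
  "j < n \<Longrightarrow> v \<le> n \<Longrightarrow> sink n \<noteq> cell n j v"
  using cell_less_sink by (metis less_irrefl)+

lemma below_sink_cell:
  assumes "q < sink n"
  obtains j v where "j < n" "v \<le> n" "q = cell n j v"
proof
  show "q div Suc n < n" using assms by (simp add: sink_def less_mult_imp_div_less)
  show "q mod Suc n \<le> n" by (simp add: less_Suc_eq_le)
  show "q = cell n (q div Suc n) (q mod Suc n)" by (simp only: cell_def div_mult_mod_eq)
qed

lemma binom_trans_cell:
  assumes "j < n" "v \<le> n"
  shows "binom_trans n (cell n j v) a =
    (if a < j then {cell n j v} else if v = n then {}
     else if a = j then row n (Suc j) (Suc v) else {sink n})"
  using assms cell_less_sink[OF assms] by (simp add: binom_trans_def Let_def)

lemma binom_trans_sink [simp]: "binom_trans n (sink n) a = {sink n}"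
  by (simp add: binom_trans_def)

lemma binom_trans_above_sink: "sink n < q \<Longrightarrow> binom_trans n q a = {}"
  by (simp add: binom_trans_def)

lemma binom_nfa_simps [simp]:
  "states (binom_nfa n) = {..<n * (n + 2)}"
  "alpha (binom_nfa n) = {..<n}"
  "trans (binom_nfa n) = binom_trans n"
  "init (binom_nfa n) = row n n 0"
  "fin (binom_nfa n) = insert (sink n) {cell n j v | j v. j < n \<and> v < n}"
  by (simp_all add: binom_nfa_def)

lemma row_Suc: "row n (Suc i) v = insert (cell n i v) (row n i v)"
  by (auto simp: row_def lessThan_Suc)

lemma row_mono: "i \<le> i' \<Longrightarrow> row n i v \<subseteq> row n i' v"
  by (auto simp: row_def)

lemma row_less_sink: "i \<le> n \<Longrightarrow> v \<le> n \<Longrightarrow> q \<in> row n i v \<Longrightarrow> q < sink n"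
  by (auto simp: row_def intro: cell_less_sink)

lemma binom_trans_le_sink: "q' \<in> binom_trans n q a \<Longrightarrow> q' \<le> sink n"
proof (cases q "sink n" rule: linorder_cases)
  case less
  then obtain j v where "j < n" "v \<le> n" "q = cell n j v" by (rule below_sink_cell)
  moreover assume "q' \<in> binom_trans n q a"
  ultimately have "q' = sink n \<or> q' = cell n j v \<or> (v < n \<and> q' \<in> row n (Suc j) (Suc v))"
    by (auto simp: binom_trans_cell split: if_splits)
  then show ?thesis
    using \<open>j < n\<close> \<open>v \<le> n\<close> cell_less_sink[of j n v] row_less_sink[of "Suc j" n "Suc v" q']
    by auto
qed (auto simp: binom_trans_above_sink)

lemma run_cell_self_loops:
  "j < n \<Longrightarrow> v \<le> n \<Longrightarrow> set w \<subseteq> {..<j} \<Longrightarrow>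
    nfa_run (binom_nfa n) {cell n j v} w = {cell n j v}"
  by (intro nfa_run_self_loops) (auto simp: binom_trans_cell)

lemma sink_in_run_append:
  assumes "sink n \<in> nfa_run (binom_nfa n) S u"
  shows "sink n \<in> nfa_run (binom_nfa n) S (u @ w)"
proof -
  have "nfa_run (binom_nfa n) {sink n} w = {sink n}"
    by (intro nfa_run_self_loops) simp
  then show ?thesis
    using nfa_run_mono[of "{sink n}" "nfa_run (binom_nfa n) S u" "binom_nfa n" w] assms
    by (auto simp: nfa_run_append)
qed

lemma run_row_rej_word:
  "i \<le> n \<Longrightarrow> m \<le> n \<Longrightarrow> nfa_run (binom_nfa n) (row n i (n - m)) (rej_word i m) \<subseteq> row n i n"
proof (induction i m rule: rej_word.induct)
  case (3 i m)
  let ?A = "binom_nfa n"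
  define v where "v = n - Suc m"
  have v: "v < n" "Suc v = n - m" using "3.prems" by (auto simp: v_def)
  have i: "i < n" using "3.prems" by simp
  have "nfa_run ?A {cell n i v} (rej_word i (Suc m)) = {cell n i v}"
    using i v set_rej_word by (intro run_cell_self_loops) auto
  moreover have "nfa_run ?A (row n i v) (rej_word i (Suc m)) \<subseteq> row n i n"
    using "3.IH"(1) "3.prems" by (simp add: v_def)
  ultimately have "nfa_run ?A (row n (Suc i) v) (rej_word i (Suc m)) \<subseteq> insert (cell n i v) (row n i n)"
    using nfa_run_Un[of ?A "{cell n i v}" "row n i v"] by (auto simp: row_Suc)
  \<comment> \<open>the top cells below i die on the letter i, while (i,v) spawns the whole next row\<close>
  moreover have "(\<Union>q\<in>insert (cell n i v) (row n i n). binom_trans n q i) = row n (Suc i) (Suc v)"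
    using i v by (auto simp: row_def binom_trans_cell)
  ultimately have lifted:
    "nfa_run ?A (row n (Suc i) v) (rej_word i (Suc m) @ [i]) \<subseteq> row n (Suc i) (n - m)"
    unfolding nfa_run_snoc v(2)[symmetric] by fastforce
  have "nfa_run ?A (row n (Suc i) v) (rej_word (Suc i) (Suc m))
      = nfa_run ?A (nfa_run ?A (row n (Suc i) v) (rej_word i (Suc m) @ [i])) (rej_word (Suc i) m)"
    by (metis append_Cons append_Nil append_assoc nfa_run_append rej_word.simps(3))
  also have "\<dots> \<subseteq> nfa_run ?A (row n (Suc i) (n - m)) (rej_word (Suc i) m)"
    using lifted by (rule nfa_run_mono)
  also have "\<dots> \<subseteq> row n (Suc i) n"
    using "3.IH"(2) "3.prems" by simp
  finally show ?case by (simp add: v_def)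
qed (simp_all add: row_def)

definition live :: "nat \<Rightarrow> nat \<Rightarrow> nat \<Rightarrow> bool" where
  "live n i q \<longleftrightarrow> q = sink n \<or> (\<exists>j<i. \<exists>v<n. q = cell n j v)"

lemma live_sink [simp]: "live n i (sink n)"
  by (simp add: live_def)

lemma live_cell: "j < i \<Longrightarrow> v < n \<Longrightarrow> live n i (cell n j v)"
  unfolding live_def by blast

lemma sink_in_run_after_live:
  assumes "q \<in> nfa_run (binom_nfa n) S u" "live n i q" "i \<le> n" "i \<le> a"
  shows "sink n \<in> nfa_run (binom_nfa n) S (u @ a # w)"
proof -
  have "sink n \<in> binom_trans n q a"
    using assms(2-4) by (auto simp: live_def binom_trans_cell)
  then have "sink n \<in> nfa_run (binom_nfa n) S (u @ [a])"
    using assms(1) by (auto simp: nfa_run_snoc)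
  then show ?thesis
    using sink_in_run_append[of n S "u @ [a]" w] by simp
qed

lemma run_row_shorter_than_rej_word:
  assumes "i \<le> n" "m \<le> n" "w \<in> lists {..<n}" "length w < length (rej_word i m)"
  shows "\<exists>q\<in>nfa_run (binom_nfa n) (row n i (n - m)) w. live n i q"
  using assms
proof (induction i m arbitrary: w rule: rej_word.induct)
  case (3 i m)
  let ?A = "binom_nfa n"
  define v where "v = n - Suc m"
  have v: "v < n" "Suc v = n - m" using "3.prems" by (auto simp: v_def)
  have i: "i < n" using "3.prems" by simp
  define x where "x = takeWhile (\<lambda>a. a < i) w"
  define r where "r = dropWhile (\<lambda>a. a < i) w"
  have w: "w = x @ r" by (simp add: x_def r_def)
  have "nfa_run ?A {cell n i v} x = {cell n i v}"
    using i v by (intro run_cell_self_loops) (auto simp: x_def dest: set_takeWhileD)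
  then have stay: "cell n i v \<in> nfa_run ?A (row n (Suc i) v) x"
    using nfa_run_mono[of "{cell n i v}" "row n (Suc i) v" ?A x] by (auto simp: row_Suc)
  have "\<exists>q\<in>nfa_run ?A (row n (Suc i) v) w. live n (Suc i) q"
  proof (cases r)
    case Nil
    have "live n (Suc i) (cell n i v)" using v by (simp add: live_cell)
    then show ?thesis using stay w Nil by (intro bexI[of _ "cell n i v"]) simp_all
  next
    case (Cons a y)
    have "\<not> a < i"
      using Cons hd_dropWhile[of "\<lambda>a. a < i" w] by (simp add: r_def)
    moreover have "a < n"
      using "3.prems"(3) w Cons by simp
    ultimately have a: "i \<le> a" "a < n" by simp_all
    consider "i < a" | "a = i" "length x < length (rej_word i (Suc m))"
      | "a = i" "length y < length (rej_word (Suc i) m)"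
      using a "3.prems"(4) w Cons by fastforce
    then show ?thesis
    proof cases
      case 1
      then have "sink n \<in> nfa_run ?A (row n (Suc i) v) w"
        using sink_in_run_after_live[of "cell n i v" n _ x "Suc i" a y] stay v i w Cons
        by (auto simp: live_def)
      then show ?thesis using live_sink by blast
    next
      case 2
      obtain q where "q \<in> nfa_run ?A (row n i v) x" "live n i q"
        using "3.IH"(1)[of x] 2 "3.prems" w by (auto simp: v_def)
      then have "q \<in> nfa_run ?A (row n (Suc i) v) x"
        using nfa_run_mono[OF row_mono[of i "Suc i" n v]] by auto
      then have "sink n \<in> nfa_run ?A (row n (Suc i) v) w"
        using sink_in_run_after_live \<open>live n i q\<close> "3.prems"(1) 2 w Cons by auto
      then show ?thesis using live_sink by blast
    next
      case 3
      obtain q where q: "q \<in> nfa_run ?A (row n (Suc i) (n - m)) y" "live n (Suc i) q"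
        using "3.IH"(2)[of y] 3 "3.prems" w Cons by auto
      have "row n (Suc i) (n - m) \<subseteq> nfa_run ?A (row n (Suc i) v) (x @ [a])"
        using stay 3 i v by (force simp: nfa_run_snoc binom_trans_cell)
      then have "q \<in> nfa_run ?A (nfa_run ?A (row n (Suc i) v) (x @ [a])) y"
        using nfa_run_mono q(1) by blast
      then have "q \<in> nfa_run ?A (row n (Suc i) v) w"
        using w Cons by (simp add: nfa_run_append nfa_run_Cons)
      then show ?thesis using q(2) by auto
    qed
  qed
  then show ?case by (simp add: v_def)
qed simp_all

lemma binom_nfa_rejects_rej_word: "rej_word n n \<notin> nfa_lang (binom_nfa n)"
proof -
  have "nfa_run (binom_nfa n) (init (binom_nfa n)) (rej_word n n) \<subseteq> row n n n"
    using run_row_rej_word[of n n n] by simp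
  moreover have "row n n n \<inter> fin (binom_nfa n) = {}"
    by (auto simp: row_def)
  ultimately show ?thesis
    by (auto simp: nfa_lang_def)
qed

lemma binom_nfa_accepts_shorter:
  assumes "w \<in> lists {..<n}" "length w < length (rej_word n n)"
  shows "w \<in> nfa_lang (binom_nfa n)"
proof -
  obtain q where "q \<in> nfa_run (binom_nfa n) (init (binom_nfa n)) w" "live n n q"
    using run_row_shorter_than_rej_word[of n n n w] assms by auto
  moreover from \<open>live n n q\<close> have "q \<in> fin (binom_nfa n)"
    by (auto simp: live_def)
  moreover have "w \<in> lists (alpha (binom_nfa n))"
    using assms(1) by simp
  ultimately show ?thesis
    unfolding nfa_lang_def by blast
qed

definition level :: "nat \<Rightarrow> nat \<Rightarrow> nat" where
  "level n q = (if q < sink n then q mod Suc n else Suc n)"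

lemma binom_trans_loop_or_level_increasing:
  "binom_trans n q a = {q} \<or> (\<forall>q'\<in>binom_trans n q a. level n q < level n q')"
proof (cases q "sink n" rule: linorder_cases)
  case less
  then obtain j v where jv: "j < n" "v \<le> n" "q = cell n j v" by (rule below_sink_cell)
  have "level n q < level n q'" if "q' \<in> binom_trans n q a" "j \<le> a" for q'
  proof -
    have "v < n" "q' = sink n \<or> q' \<in> row n (Suc j) (Suc v)"
      using that jv by (auto simp: binom_trans_cell split: if_splits)
    then show ?thesis
      using jv cell_less_sink by (auto simp: level_def row_def sink_def)
  qed
  then show ?thesis
    using jv by (auto simp: binom_trans_cell)
qed (auto simp: binom_trans_above_sink)

lemma nfa_binom_nfa:
  assumes "1 \<le> n"
  shows "nfa (binom_nfa n)"
proof -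
  have "sink n < n * (n + 2)" using assms by (simp add: sink_def)
  then have upto_sink: "{..sink n} \<subseteq> states (binom_nfa n)" by auto
  have "init (binom_nfa n) \<subseteq> {..sink n}" "fin (binom_nfa n) \<subseteq> {..sink n}"
    by (auto simp: row_def intro: less_imp_le cell_less_sink)
  moreover have "trans (binom_nfa n) q a \<subseteq> {..sink n}" for q a
    using binom_trans_le_sink by auto
  moreover have "finite (states (binom_nfa n))" "finite (alpha (binom_nfa n))"
    by simp_all
  ultimately show ?thesis
    using upto_sink unfolding nfa_def by blast
qed

lemma rpoNFA_binom_nfa: "1 \<le> n \<Longrightarrow> rpoNFA (binom_nfa n)"
  using binom_trans_loop_or_level_increasing
  by (intro rpoNFA_if_rank_increasing[where rk = "level n"] nfa_binom_nfa) auto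

theorem mainTheorem15:
  fixes n :: nat
  assumes "n \<ge> 1"
  shows "\<exists>A :: (nat, nat) nfa.
    rpoNFA A \<and> card (alpha A) = n \<and> card (states A) = n * (n + 2) \<and>
    (\<exists>w\<in>lists (alpha A). w \<notin> nfa_lang A \<and> length w = (2 * n choose n) - 1) \<and>
    (\<forall>w\<in>lists (alpha A). length w < (2 * n choose n) - 1 \<longrightarrow> w \<in> nfa_lang A) \<and>
    (\<forall>D :: ('q, nat) dfa. dfa D \<and> dalpha D = alpha A \<and> dfa_lang D = nfa_lang A
        \<longrightarrow> card (dstates D) \<ge> (2 * n choose n))"
proof -
  let ?A = "binom_nfa n"
  have len: "length (rej_word n n) = (2 * n choose n) - 1"
    by (simp add: length_rej_word mult_2)
  have word: "rej_word n n \<in> lists (alpha ?A)"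
    using set_rej_word[of n n] by auto
  have shorter: "\<forall>w\<in>lists (alpha ?A). length w < (2 * n choose n) - 1 \<longrightarrow> w \<in> nfa_lang ?A"
    using binom_nfa_accepts_shorter len by simp
  have "(2 * n choose n) \<le> card (dstates D)"
    if "dfa D" "dalpha D = alpha ?A" "dfa_lang D = nfa_lang ?A" for D :: "('q, nat) dfa"
    using dfa_card_gt_shortest_rejected[of D "rej_word n n"] that word shorter len
      binom_nfa_rejects_rej_word by simp
  then show ?thesis
    using rpoNFA_binom_nfa[OF assms] word binom_nfa_rejects_rej_word[of n] len shorter
    by (intro exI[of _ ?A]) auto
qed

end
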